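(* For every $\rho\in\mathfrak M_d$: (i) $\chi_*(\bar\rho)\le\chi_*(\rho)$; (ii) $\sup_\theta R^{\mathrm{fc}}_\theta(\bar\rho)\le\sup_\theta R^{\mathrm{fc}}_\theta(\rho)$, the suprema being over $\theta\in\Delta_d$ with all $n\theta_i$ integers; (iii) $\Sigma(\bar\rho)=\frac{\operatorname{tr}\Sigma(\rho)}{d-1}I_{d-1}$.
   Context: Fix $d\ge2$, $n\ge1$. Let $H\in\mathbb R^{d\times(d-1)}$ have orthonormal columns spanning $\{u\in\mathbb R^d:\mathbf 1^\top u=0\}$, $\gamma_i:=H^\top e_i$, $\mathcal X_d:=\{x\in\mathbb R^{d-1}:1+\gamma_i^\top x\ge0\ \forall i\}$, $\Delta_d$ the probability simplex. An anchored law is a Borel probability measure $\rho$ on $\mathcal X_d$ with $\int x\,\rho(dx)=0$; $\mathfrak M_d$ is the set of anchored laws; $W_\rho(B\mid i):=\int_B(1+\gamma_i^\top x)\rho(dx)$; $\Sigma(\rho):=\int xx^\top\rho(dx)$. Budget: $\chi_*(\rho):=\max_{i\ne j}\int\frac{((\gamma_j-\gamma_i)^\top x)^2}{1+\gamma_i^\top x}\rho(dx)$, with the integrand $0$ where $1+\gamma_i^\top x=0$ and $(\gamma_j-\gamma_i)^\top x=0$, and $+\infty$ where $1+\gamma_i^\top x=0\ne(\gamma_j-\gamma_i)^\top x$. Fixed-composition risk: for $\theta\in\Delta_d$ with $n\theta_i\in\mathbb Z$, let $X_1,\dots,X_n$ be independent with exactly $n\theta_i$ drawn from $W_\rho(\cdot\mid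 i)$, $\widehat\theta_\rho:=\mathbf 1/d+H\Sigma(\rho)^{-1}\frac1n\sum_mX_m$ and $R^{\mathrm{fc}}_\theta(\rho):=\mathbb E\|\widehat\theta_\rho-\theta\|_2^2$, with the convention $R^{\mathrm{fc}}_\theta(\rho):=+\infty$ whenever $\Sigma(\rho)$ is singular. Symmetrization: for a permutation $\pi$ of $[d]$ with matrix $\Pi$, $P_\pi:=H^\top\Pi H$, and $\bar\rho:=\frac1{d!}\sum_\pi(P_\pi)_\#\rho$. *)

theory Defs
  imports "HOL-Probability.Probability"
begin

text \<open>Dimensions are types: 'd indexes R^d, 'k indexes R^(d-1) (CARD('k) = CARD('d) - 1).
  H :: real^'k^'d is a d x (d-1) matrix.\<close>

definition valid_H :: "real^'k^'d \<Rightarrow> bool" where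
  "valid_H H \<longleftrightarrow> transpose H ** H = mat 1 \<and>
     range (\<lambda>v. H *v v) = {u :: real^'d. (\<Sum>i\<in>UNIV. u $ i) = 0}"

definition gamma :: "real^'k^'d \<Rightarrow> 'd \<Rightarrow> real^'k" where
  "gamma H i = transpose H *v axis i 1"

definition Xd :: "real^'k^'d \<Rightarrow> (real^'k) set" where
  "Xd H = {x. \<forall>i. 1 + gamma H i \<bullet> x \<ge> 0}"

definition anchored :: "real^'k^'d \<Rightarrow> (real^'k) measure \<Rightarrow> bool" where
  "anchored H \<rho> \<longleftrightarrow> prob_space \<rho> \<and> sets \<rho> = sets borel \<and> emeasure \<rho> (Xd H) = 1 \<and>
     integrable \<rho> (\<lambda>x. x) \<and> integral\<^sup>L \<rho> (\<lambda>x. x) = 0"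

definition W :: "real^'k^'d \<Rightarrow> (real^'k) measure \<Rightarrow> 'd \<Rightarrow> (real^'k) measure" where
  "W H \<rho> i = density \<rho> (\<lambda>x. ennreal (1 + gamma H i \<bullet> x))"

definition Sigma_mat :: "(real^'k) measure \<Rightarrow> real^'k^'k" where
  "Sigma_mat \<rho> = (\<chi> a b. integral\<^sup>L \<rho> (\<lambda>x. x $ a * x $ b))"

definition chi_integrand :: "real^'k^'d \<Rightarrow> 'd \<Rightarrow> 'd \<Rightarrow> real^'k \<Rightarrow> ennreal" where
  "chi_integrand H i j x =
     (if 1 + gamma H i \<bullet> x = 0
      then (if (gamma H j - gamma H i) \<bullet> x = 0 then 0 else \<infinity>)
      else ennreal (((gamma H j - gamma H i) \<bullet> x)\<^sup>2 / (1 + gamma H i \<bullet> x)))"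

definition chi_star :: "real^'k^'d \<Rightarrow> (real^'k) measure \<Rightarrow> ennreal" where
  "chi_star H \<rho> = Max ((\<lambda>(i,j). \<integral>\<^sup>+ x. chi_integrand H i j x \<partial>\<rho>) ` {(i,j). i \<noteq> j})"

definition prob_simplex :: "(real^'d) set" where
  "prob_simplex = {\<theta>. (\<forall>i. \<theta> $ i \<ge> 0) \<and> (\<Sum>i\<in>UNIV. \<theta> $ i) = 1}"

definition Theta_n :: "nat \<Rightarrow> (real^'d) set" where
  "Theta_n n = {\<theta>\<in>prob_simplex. \<forall>i. \<exists>k::nat. real n * \<theta> $ i = real k}"

definition theta_hat :: "real^'k^'d \<Rightarrow> (real^'k) measure \<Rightarrow> nat \<Rightarrow> (nat \<Rightarrow> real^'k) \<Rightarrow> real^'d" where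
  "theta_hat H \<rho> n X = (\<chi> i. 1 / real CARD('d)) +
      H *v (matrix_inv (Sigma_mat \<rho>) *v ((1 / real n) *\<^sub>R (\<Sum>m<n. X m)))"

text \<open>A labelling of the samples 0..n-1 by classes with exactly n*theta_i samples of class i.
  The risk does not depend on which such labelling is chosen.\<close>
definition labelling :: "nat \<Rightarrow> real^'d \<Rightarrow> (nat \<Rightarrow> 'd)" where
  "labelling n \<theta> = (SOME lab. \<forall>i. real (card {m. m < n \<and> lab m = i}) = real n * \<theta> $ i)"

definition R_fc :: "real^'k^'d \<Rightarrow> nat \<Rightarrow> real^'d \<Rightarrow> (real^'k) measure \<Rightarrow> ennreal" where
  "R_fc H n \<theta> \<rho> =
     (if \<not> invertible (Sigma_mat \<rho>) then \<infinity>
      else \<integral>\<^sup>+ X. ennreal ((norm (theta_hat H \<rho> n X - \<theta>))\<^sup>2)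
              \<partial>(PiM {..<n} (\<lambda>m. W H \<rho> (labelling n \<theta> m))))"

definition perm_mat :: "('d \<Rightarrow> 'd) \<Rightarrow> real^'d^'d" where
  "perm_mat \<pi> = (\<chi> a b. if a = \<pi> b then 1 else 0)"

definition P_perm :: "real^'k^'d \<Rightarrow> ('d \<Rightarrow> 'd) \<Rightarrow> real^'k^'k" where
  "P_perm H \<pi> = transpose H ** perm_mat \<pi> ** H"

definition sym_law :: "real^'k^'d \<Rightarrow> (real^'k) measure \<Rightarrow> (real^'k) measure" where
  "sym_law H \<rho> = measure_of UNIV (sets borel)
     (\<lambda>A. (\<Sum>\<pi>\<in>{\<pi>. \<pi> permutes (UNIV :: 'd set)}.
             emeasure (distr \<rho> borel (\<lambda>x. P_perm H \<pi> *v x)) A) / of_nat (fact CARD('d)))"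

end

theory Submission
  imports Defs
begin

text \<open>Write y = H x. The map P_\<pi> permutes the coordinates of y, so it preserves X_d, the norm and
  the mean, and it moves \<gamma>_i to \<gamma>_(\<pi>\<inverse> i). Hence the budget integrand of the pair (i, j) for the
  image of \<rho> under P_\<pi> is that of (\<pi>\<inverse> i, \<pi>\<inverse> j) for \<rho>, and an average of these integrals cannot
  exceed their maximum, which gives (i). Averaging the products y_c y_e over all permutations of a
  vector y with coordinate sum 0 gives a multiple of the centring projection, so the covariance of
  the symmetrised law is scalar, which gives (iii).

  For (ii), the risk at the composition \<theta> is (1/n) \<Sum>_i \<theta>_i v_i, where v_i is the variance of the
  whitened sample \<Sigma>\<inverse>X under W(.|i). The worst vertex of the simplex is therefore at least the
  average of the v_i, which is E|\<Sigma>\<inverse>x|^2 - (1 - 1/d). For the symmetrised law every v_i equals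
  k^2 / tr \<Sigma> - (1 - 1/d) with k = d - 1, and this is smaller by Cauchy-Schwarz, since
  k = E \<langle>\<Sigma>\<inverse>x, x\<rangle>.\<close>

declare transpose_matrix_vector [simp del]

lemma perm_mat_mult_vec:
  fixes y :: "real^'d"
  assumes "\<pi> permutes UNIV"
  shows "perm_mat \<pi> *v y = (\<chi> a. y $ inv \<pi> a)"
proof -
  have "(a = \<pi> b) = (b = inv \<pi> a)" for a b
    using permutes_inverses[OF assms] by metis
  then show ?thesis
    by (simp add: vec_eq_iff matrix_vector_mult_def perm_mat_def if_distrib[where f="\<lambda>t. t * _"]
        cong: if_cong)
qed

lemma matrix_inv_left:
  fixes A :: "real^'n^'n"
  assumes "invertible A"
  shows "matrix_inv A ** A = mat 1"
  using someI_ex[OF assms[unfolded invertible_def]] by (simp add: matrix_inv_def)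

lemma
  fixes c :: real
  assumes "c \<noteq> 0"
  shows invertible_scaleR_mat_1: "invertible (c *\<^sub>R mat 1 :: real^'n^'n)"
    and matrix_inv_scaleR_mat_1: "matrix_inv (c *\<^sub>R mat 1 :: real^'n^'n) = (1 / c) *\<^sub>R mat 1"
proof -
  have inverse: "(a *\<^sub>R mat 1 :: real^'n^'n) ** (b *\<^sub>R mat 1) = mat 1" if "a * b = 1" for a b
    using that by (simp flip: scalar_matrix_assoc add: matrix_scaleR_vector_ac matrix_mul_lid
        scaleR_matrix_vector_assoc)
  show "invertible (c *\<^sub>R mat 1 :: real^'n^'n)"
    unfolding invertible_def using assms by (intro exI[of _ "(1 / c) *\<^sub>R mat 1"]) (simp add: inverse)
  then have "matrix_inv (c *\<^sub>R mat 1 :: real^'n^'n) ** (c *\<^sub>R mat 1 ** (1 / c) *\<^sub>R mat 1) =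
      (1 / c) *\<^sub>R mat 1"
    by (simp add: matrix_mul_assoc matrix_inv_left matrix_mul_lid)
  then show "matrix_inv (c *\<^sub>R mat 1 :: real^'n^'n) = (1 / c) *\<^sub>R mat 1"
    using assms by (simp add: inverse matrix_mul_rid)
qed

lemma continuous_on_matrix_vector_mult [continuous_intros]:
  fixes A :: "real^'n^'m"
  shows "continuous_on S f \<Longrightarrow> continuous_on S (\<lambda>x. A *v f x)"
  by (rule continuous_on_compose2[OF matrix_vector_mult_linear_continuous_on]) auto

lemma power2_norm_vec: "(norm (v :: real^'n))\<^sup>2 = (\<Sum>a\<in>UNIV. (v $ a)\<^sup>2)"
  by (simp add: norm_vec_def L2_set_def sum_nonneg)

section \<open>Sums over permutations\<close>

abbreviation perms :: "('d::finite \<Rightarrow> 'd) set" where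
  "perms \<equiv> {\<pi>. \<pi> permutes UNIV}"

lemma sum_comp_permutes_UNIV: "\<pi> permutes UNIV \<Longrightarrow> (\<Sum>j\<in>UNIV. f (\<pi> j)) = sum f UNIV"
  using sum.permute[of \<pi> UNIV f] by (simp add: o_def)

lemma card_perms: "card (perms :: ('d::finite \<Rightarrow> 'd) set) = fact CARD('d)"
  by (rule card_permutations) simp_all

lemma sum_perms_apply:
  fixes y :: "'d::finite \<Rightarrow> real"
  shows "(\<Sum>\<pi>\<in>perms. y (\<pi> i)) = fact CARD('d) / real CARD('d) * sum y UNIV"
proof -
  define S where "S i = (\<Sum>\<pi>\<in>perms. y (\<pi> i))" for i
  have "S j = S i" for j
    unfolding S_def
    by (subst sum_permutations_compose_right[OF permutes_swap_id[of i UNIV j]]) simp_all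
  then have "(\<Sum>j\<in>UNIV. S j) = (\<Sum>j\<in>(UNIV :: 'd set). S i)"
    by (intro sum.cong refl)
  then have "real CARD('d) * S i = (\<Sum>j\<in>UNIV. S j)"
    by simp
  also have "\<dots> = (\<Sum>\<pi>\<in>perms. \<Sum>j\<in>UNIV. y (\<pi> j))"
    unfolding S_def by (rule sum.swap)
  also have "\<dots> = (\<Sum>\<pi>\<in>(perms :: ('d \<Rightarrow> 'd) set). sum y UNIV)"
    by (rule sum.cong[OF refl]) (simp add: sum_comp_permutes_UNIV)
  finally show ?thesis
    by (simp add: S_def card_perms field_simps)
qed

lemma sum_perms_apply_mult_distinct:
  fixes y :: "'d::finite \<Rightarrow> real"
  assumes "sum y UNIV = 0" "c \<noteq> e"
  shows "(\<Sum>\<pi>\<in>perms. y (\<pi> c) * y (\<pi> e)) =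
    - fact CARD('d) * (\<Sum>j\<in>UNIV. (y j)\<^sup>2) / (real CARD('d) * (real CARD('d) - 1))"
proof -
  define S where "S e = (\<Sum>\<pi>\<in>perms. y (\<pi> c) * y (\<pi> e))" for e
  define d where "d = real CARD('d)"
  have "S e' = S e" if "e' \<noteq> c" for e'
  proof -
    let ?\<tau> = "Transposition.transpose e' e"
    have "S e = (\<Sum>\<pi>\<in>perms. y ((\<pi> \<circ> ?\<tau>) c) * y ((\<pi> \<circ> ?\<tau>) e))"
      unfolding S_def by (rule sum_permutations_compose_right[OF permutes_swap_id]) simp_all
    then show ?thesis
      using assms(2) that by (simp add: S_def Transposition.transpose_def)
  qed
  then have "(\<Sum>e'\<in>UNIV - {c}. S e') = (d - 1) * S e"
    by (simp add: d_def of_nat_diff)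
  moreover have "(\<Sum>e'\<in>UNIV. S e') = (\<Sum>\<pi>\<in>perms. y (\<pi> c) * (\<Sum>e'\<in>UNIV. y (\<pi> e')))"
    unfolding S_def by (subst sum.swap) (simp add: sum_distrib_left)
  then have "0 = S c + (\<Sum>e'\<in>UNIV - {c}. S e')"
    using assms(1) by (simp add: sum_comp_permutes_UNIV sum.remove[of UNIV c])
  ultimately have "(d - 1) * S e = - S c"
    by simp
  moreover have "S c = fact CARD('d) * (\<Sum>j\<in>UNIV. (y j)\<^sup>2) / d"
    using sum_perms_apply[of "\<lambda>j. (y j)\<^sup>2" c] by (simp add: S_def d_def power2_eq_square)
  moreover have "d \<ge> 2"
    using assms(2) card_mono[of UNIV "{c, e}"] by (simp add: d_def)
  ultimately have "S e = - fact CARD('d) * (\<Sum>j\<in>UNIV. (y j)\<^sup>2) / (d * (d - 1))"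
    by (simp add: field_simps)
  then show ?thesis
    by (simp add: S_def d_def)
qed

lemma borel_measurable_sets_eq_borel:
  "sets M = sets borel \<Longrightarrow> f \<in> borel_measurable borel \<Longrightarrow> f \<in> borel_measurable M"
  using measurable_cong_sets[of M borel borel borel] by simp

lemma borel_measurable_matrix_vector_mult:
  fixes A :: "real^'n^'m"
  assumes "sets M = sets borel"
  shows "(\<lambda>x. A *v x) \<in> borel_measurable M"
  by (rule borel_measurable_sets_eq_borel[OF assms])
    (rule borel_measurable_continuous_onI, rule matrix_vector_mult_linear_continuous_on)

lemma integrable_continuous_AE_in_compact:
  fixes f :: "'a::topological_space \<Rightarrow> 'b::{banach, second_countable_topology}"
  assumes "finite_measure M" "sets M = sets borel" "AE x in M. x \<in> K" "compact K"
    and "continuous_on UNIV f"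
  shows "integrable M f"
proof -
  have "compact (f ` K)"
    by (rule compact_continuous_image[OF continuous_on_subset[OF assms(5)] assms(4)]) simp
  then obtain B where B: "\<And>x. x \<in> K \<Longrightarrow> norm (f x) \<le> B"
    using compact_imp_bounded bounded_iff by (metis imageI)
  have "AE x in M. norm (f x) \<le> B"
    using assms(3) by (rule eventually_mono) (rule B)
  moreover have "f \<in> borel_measurable M"
    by (rule borel_measurable_sets_eq_borel[OF assms(2) borel_measurable_continuous_onI[OF assms(5)]])
  ultimately show ?thesis
    using finite_measure.integrable_const_bound[OF assms(1)] by blast
qed

lemma integral_norm_diff_mean_square:
  fixes Y :: "'a \<Rightarrow> 'b::{euclidean_space, second_countable_topology}"
  assumes "prob_space M" "integrable M Y" "integrable M (\<lambda>x. (norm (Y x))\<^sup>2)"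
  shows "(\<integral>x. (norm (Y x - integral\<^sup>L M Y))\<^sup>2 \<partial>M) = (\<integral>x. (norm (Y x))\<^sup>2 \<partial>M) - (norm (integral\<^sup>L M Y))\<^sup>2"
proof -
  let ?m = "integral\<^sup>L M Y"
  have "(norm (Y x - ?m))\<^sup>2 = (norm (Y x))\<^sup>2 - 2 * (?m \<bullet> Y x) + (norm ?m)\<^sup>2" for x
    by (simp add: power2_norm_eq_inner inner_diff_left inner_diff_right inner_commute)
  then show ?thesis
    using assms by (simp add: prob_space.finite_measure finite_measure.integrable_const
        prob_space.prob_space power2_norm_eq_inner)
qed

lemma square_le_of_quadratic_nonneg:
  fixes Q K T :: real
  assumes "Q \<ge> 0" "\<And>s. 0 \<le> s\<^sup>2 * Q - 2 * s * K + T"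
  shows "K\<^sup>2 \<le> Q * T"
proof (cases "Q = 0")
  case True
  have "K = 0"
  proof (rule ccontr)
    assume "K \<noteq> 0"
    then have "2 * ((T + 1) / (2 * K)) * K = T + 1"
      by simp
    then show False
      using assms(2)[of "(T + 1) / (2 * K)"] True by simp
  qed
  then show ?thesis
    using True by simp
next
  case False
  then have "(K / Q)\<^sup>2 * Q - 2 * (K / Q) * K + T = T - K\<^sup>2 / Q"
    by (simp add: power2_eq_square)
  then have "K\<^sup>2 / Q \<le> T"
    using assms(2)[of "K / Q"] by simp
  then show ?thesis
    using False assms(1) by (simp add: divide_le_eq mult.commute)
qed

lemma integral_inner_square_le:
  fixes u v :: "'a \<Rightarrow> 'b::{euclidean_space, second_countable_topology}"
  assumes "integrable M (\<lambda>x. (norm (u x))\<^sup>2)" "integrable M (\<lambda>x. (norm (v x))\<^sup>2)"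
    and "integrable M (\<lambda>x. u x \<bullet> v x)"
  shows "(\<integral>x. u x \<bullet> v x \<partial>M)\<^sup>2 \<le> (\<integral>x. (norm (u x))\<^sup>2 \<partial>M) * (\<integral>x. (norm (v x))\<^sup>2 \<partial>M)"
proof (rule square_le_of_quadratic_nonneg)
  show "(\<integral>x. (norm (u x))\<^sup>2 \<partial>M) \<ge> 0"
    by (rule integral_nonneg_AE) simp
  fix s
  have "(norm (s *\<^sub>R u x - v x))\<^sup>2 = s\<^sup>2 * (norm (u x))\<^sup>2 - 2 * s * (u x \<bullet> v x) + (norm (v x))\<^sup>2" for x
    unfolding power2_norm_eq_inner
    by (simp add: inner_diff_left inner_diff_right inner_commute power2_eq_square algebra_simps)
  then have "(\<integral>x. (norm (s *\<^sub>R u x - v x))\<^sup>2 \<partial>M) =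
      s\<^sup>2 * (\<integral>x. (norm (u x))\<^sup>2 \<partial>M) - 2 * s * (\<integral>x. u x \<bullet> v x \<partial>M) + (\<integral>x. (norm (v x))\<^sup>2 \<partial>M)"
    using assms by simp
  moreover have "0 \<le> (\<integral>x. (norm (s *\<^sub>R u x - v x))\<^sup>2 \<partial>M)"
    by (rule integral_nonneg_AE) simp
  ultimately show "0 \<le> s\<^sup>2 * (\<integral>x. (norm (u x))\<^sup>2 \<partial>M) - 2 * s * (\<integral>x. u x \<bullet> v x \<partial>M) +
      (\<integral>x. (norm (v x))\<^sup>2 \<partial>M)"
    by simp
qed

lemma nn_integral_uniform_count_measure:
  "finite A \<Longrightarrow> (\<integral>\<^sup>+x. f x \<partial>uniform_count_measure A) = ennreal (1 / card A) * (\<Sum>x\<in>A. f x)"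
  by (simp add: uniform_count_measure_def nn_integral_point_measure_finite sum_distrib_left)

lemma measurable_uniform_count_measure_pair:
  assumes "finite A" "\<And>a. a \<in> A \<Longrightarrow> T a \<in> M \<rightarrow>\<^sub>M N"
  shows "(\<lambda>(a, x). T a x) \<in> uniform_count_measure A \<Otimes>\<^sub>M M \<rightarrow>\<^sub>M N"
proof -
  have "(\<lambda>(a, x). T a x) \<in> count_space A \<Otimes>\<^sub>M M \<rightarrow>\<^sub>M N"
    by (rule measurable_pair_measure_countable1) (simp_all add: countable_finite assms)
  then show ?thesis
    by (subst measurable_cong_sets[OF sets_pair_measure_cong[OF
          sets_uniform_count_measure_count_space refl] refl])
qed

text \<open>The image of uniform_count_measure A \<Otimes> M under (a, x) \<mapsto> T a x is the law of T a X for a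
  uniform on A and independent of X \<sim> M.\<close>
lemma nn_integral_uniform_mixture:
  assumes A: "finite A" and M: "sigma_finite_measure M"
    and T: "\<And>a. a \<in> A \<Longrightarrow> T a \<in> M \<rightarrow>\<^sub>M N" and f: "f \<in> borel_measurable N"
  shows "(\<integral>\<^sup>+y. f y \<partial>distr (uniform_count_measure A \<Otimes>\<^sub>M M) N (\<lambda>(a, x). T a x)) =
    ennreal (1 / card A) * (\<Sum>a\<in>A. \<integral>\<^sup>+x. f (T a x) \<partial>M)"
proof -
  have T': "(\<lambda>(a, x). T a x) \<in> uniform_count_measure A \<Otimes>\<^sub>M M \<rightarrow>\<^sub>M N"
    by (rule measurable_uniform_count_measure_pair[OF A T])
  have "(\<integral>\<^sup>+y. f y \<partial>distr (uniform_count_measure A \<Otimes>\<^sub>M M) N (\<lambda>(a, x). T a x)) =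
      (\<integral>\<^sup>+z. f (case z of (a, x) \<Rightarrow> T a x) \<partial>uniform_count_measure A \<Otimes>\<^sub>M M)"
    using T' f by (simp add: nn_integral_distr)
  also have "\<dots> = (\<integral>\<^sup>+a. \<integral>\<^sup>+x. f (T a x) \<partial>M \<partial>uniform_count_measure A)"
    using sigma_finite_measure.nn_integral_fst[OF M measurable_compose[OF T' f], symmetric] by simp
  finally show ?thesis
    by (simp add: nn_integral_uniform_count_measure[OF A])
qed

lemma integral_uniform_mixture:
  fixes f :: "'b \<Rightarrow> 'c::{banach, second_countable_topology}"
  assumes A: "finite A" and M: "sigma_finite_measure M"
    and T: "\<And>a. a \<in> A \<Longrightarrow> T a \<in> M \<rightarrow>\<^sub>M N" and f: "f \<in> borel_measurable N"
    and int: "\<And>a. a \<in> A \<Longrightarrow> integrable M (\<lambda>x. f (T a x))"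
  shows "(\<integral>y. f y \<partial>distr (uniform_count_measure A \<Otimes>\<^sub>M M) N (\<lambda>(a, x). T a x)) =
    (1 / card A) *\<^sub>R (\<Sum>a\<in>A. \<integral>x. f (T a x) \<partial>M)"
proof -
  let ?P = "uniform_count_measure A \<Otimes>\<^sub>M M"
  let ?T = "\<lambda>(a, x). T a x"
  have T': "?T \<in> ?P \<rightarrow>\<^sub>M N"
    by (rule measurable_uniform_count_measure_pair[OF A T])
  have "(\<lambda>z. ennreal (norm (f (?T z)))) \<in> borel_measurable ?P"
    using measurable_compose[OF T' f] by measurable
  from sigma_finite_measure.nn_integral_fst[OF M this, symmetric]
  have "(\<integral>\<^sup>+z. ennreal (norm (f (?T z))) \<partial>?P) =
      (\<integral>\<^sup>+a. \<integral>\<^sup>+x. ennreal (norm (f (T a x))) \<partial>M \<partial>uniform_count_measure A)"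
    by simp
  also have "\<dots> < \<infinity>"
    using int A by (simp add: nn_integral_uniform_count_measure integrable_iff_bounded
        ennreal_sum_less_top ennreal_mult_less_top)
  finally have int_P: "integrable ?P (\<lambda>z. f (?T z))"
    using measurable_compose[OF T' f] by (simp add: integrable_iff_bounded)
  have "finite_measure (uniform_count_measure A)"
    using A by (intro finite_measureI) (simp add: emeasure_uniform_count_measure space_uniform_count_measure)
  then have "pair_sigma_finite (uniform_count_measure A) M"
    by (rule pair_sigma_finite.intro[OF finite_measure.sigma_finite_measure M])
  from pair_sigma_finite.integral_fst'[OF this int_P]
  have "(\<integral>z. f (?T z) \<partial>?P) = (\<integral>a. \<integral>x. f (T a x) \<partial>M \<partial>uniform_count_measure A)"
    by simp
  then show ?thesis
    unfolding integral_distr[OF T' f] using A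
    by (simp add: uniform_count_measure_def lebesgue_integral_point_measure_finite scaleR_sum_right)
qed

lemma prod_if_eq_two:
  fixes a b :: real
  assumes "finite I" "m \<in> I" "m' \<in> I" "m \<noteq> m'"
  shows "(\<Prod>j\<in>I. if j = m then a else if j = m' then b else 1) = a * b"
proof -
  have "(\<Prod>j\<in>I. if j = m then a else if j = m' then b else 1) =
      (\<Prod>j\<in>I. (if j = m then a else 1) * (if j = m' then b else 1))"
    by (rule prod.cong) (use assms in auto)
  also have "\<dots> = a * b" using assms by (simp add: prod.distrib)
  finally show ?thesis .
qed

lemma
  fixes M :: "'i \<Rightarrow> 'a measure" and g :: "'i \<Rightarrow> 'a \<Rightarrow> real"
  assumes fin: "finite I" and mI: "m \<in> I" and m'I: "m' \<in> I" and ps: "\<And>i. prob_space (M i)"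
    and int1: "\<And>i. i \<in> I \<Longrightarrow> integrable (M i) (g i)"
    and int2: "\<And>i. i \<in> I \<Longrightarrow> integrable (M i) (\<lambda>x. (g i x)\<^sup>2)"
  shows integrable_coordinates_mult: "integrable (Pi\<^sub>M I M) (\<lambda>X. g m (X m) * g m' (X m'))"
    and integral_coordinates_mult: "(\<integral>X. g m (X m) * g m' (X m') \<partial>Pi\<^sub>M I M) =
      (if m = m' then \<integral>x. (g m x)\<^sup>2 \<partial>M m else integral\<^sup>L (M m) (g m) * integral\<^sup>L (M m') (g m'))"
proof -
  interpret product_sigma_finite M
    by (rule product_sigma_finite.intro) (rule prob_space_imp_sigma_finite[OF ps])
  have one: "integral\<^sup>L (M j) (\<lambda>x. 1) = (1::real)" "integrable (M j) (\<lambda>x. 1::real)" for j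
    using ps[of j] by (simp_all add: prob_space.prob_space prob_space.finite_measure
        finite_measure.integrable_const)
  define f where "f j x = (if j = m then if m = m' then (g m x)\<^sup>2 else g m x else if j = m' then g m' x else 1)"
    for j x
  have f: "integrable (M j) (f j)" if "j \<in> I" for j
    unfolding f_def using int1 int2 that mI m'I one by (cases "j = m"; cases "j = m'") auto
  have "(\<Prod>j\<in>I. f j (X j)) = g m (X m) * g m' (X m')" for X
    using prod_if_eq_two[OF fin mI m'I, of "g m (X m)" "g m' (X m')"] fin mI
    by (cases "m = m'") (simp_all add: f_def power2_eq_square cong: if_cong)
  moreover have "integral\<^sup>L (M j) (f j) = (if j = m then if m = m' then \<integral>x. (g m x)\<^sup>2 \<partial>M m
      else integral\<^sup>L (M m) (g m) else if j = m' then integral\<^sup>L (M m') (g m') else 1)" for j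
    using ps[of j] by (cases "j = m"; cases "j = m'") (simp_all add: f_def[abs_def] prob_space.prob_space)
  then have "(\<Prod>j\<in>I. integral\<^sup>L (M j) (f j)) =
      (if m = m' then \<integral>x. (g m x)\<^sup>2 \<partial>M m else integral\<^sup>L (M m) (g m) * integral\<^sup>L (M m') (g m'))"
    using prod_if_eq_two[OF fin mI m'I] fin mI by (cases "m = m'") (simp_all cong: if_cong)
  ultimately show "integrable (Pi\<^sub>M I M) (\<lambda>X. g m (X m) * g m' (X m'))"
    and "(\<integral>X. g m (X m) * g m' (X m') \<partial>Pi\<^sub>M I M) =
      (if m = m' then \<integral>x. (g m x)\<^sup>2 \<partial>M m else integral\<^sup>L (M m) (g m) * integral\<^sup>L (M m') (g m'))"
    using product_integrable_prod[OF fin f] product_integral_prod[OF fin f] by simp_all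
qed

lemma
  fixes M :: "'i \<Rightarrow> 'a measure" and g :: "'i \<Rightarrow> 'a \<Rightarrow> real"
  assumes fin: "finite I" and ps: "\<And>i. prob_space (M i)"
    and int1: "\<And>i. i \<in> I \<Longrightarrow> integrable (M i) (g i)"
    and int2: "\<And>i. i \<in> I \<Longrightarrow> integrable (M i) (\<lambda>x. (g i x)\<^sup>2)"
    and mean: "\<And>i. i \<in> I \<Longrightarrow> integral\<^sup>L (M i) (g i) = 0"
  shows integrable_square_sum_indep: "integrable (Pi\<^sub>M I M) (\<lambda>X. (\<Sum>i\<in>I. g i (X i))\<^sup>2)"
    and integral_square_sum_indep:
      "(\<integral>X. (\<Sum>i\<in>I. g i (X i))\<^sup>2 \<partial>Pi\<^sub>M I M) = (\<Sum>i\<in>I. \<integral>x. (g i x)\<^sup>2 \<partial>M i)"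
proof -
  have coordinates: "integrable (Pi\<^sub>M I M) (\<lambda>X. g i (X i) * g j (X j))" if "i \<in> I" "j \<in> I" for i j
    by (rule integrable_coordinates_mult[where M=M and g=g, OF fin that ps int1 int2])
  have square: "(\<Sum>i\<in>I. g i (X i))\<^sup>2 = (\<Sum>i\<in>I. \<Sum>j\<in>I. g i (X i) * g j (X j))" for X
    by (simp add: power2_eq_square sum_product)
  show "integrable (Pi\<^sub>M I M) (\<lambda>X. (\<Sum>i\<in>I. g i (X i))\<^sup>2)"
    unfolding square by (intro Bochner_Integration.integrable_sum coordinates)
  have "(\<integral>X. (\<Sum>i\<in>I. g i (X i))\<^sup>2 \<partial>Pi\<^sub>M I M) =
      (\<Sum>i\<in>I. \<integral>X. (\<Sum>j\<in>I. g i (X i) * g j (X j)) \<partial>Pi\<^sub>M I M)"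
    unfolding square by (intro Bochner_Integration.integral_sum Bochner_Integration.integrable_sum coordinates)
  also have "\<dots> = (\<Sum>i\<in>I. \<Sum>j\<in>I. \<integral>X. g i (X i) * g j (X j) \<partial>Pi\<^sub>M I M)"
    by (intro sum.cong refl Bochner_Integration.integral_sum coordinates)
  also have "\<dots> = (\<Sum>i\<in>I. \<Sum>j\<in>I. if i = j then \<integral>x. (g i x)\<^sup>2 \<partial>M i else 0)"
  proof (intro sum.cong refl)
    fix i j
    assume "i \<in> I" "j \<in> I"
    then show "(\<integral>X. g i (X i) * g j (X j) \<partial>Pi\<^sub>M I M) = (if i = j then \<integral>x. (g i x)\<^sup>2 \<partial>M i else 0)"
      using integral_coordinates_mult[where M=M and g=g, OF fin \<open>i \<in> I\<close> \<open>j \<in> I\<close> ps int1 int2] mean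
      by simp
  qed
  finally show "(\<integral>X. (\<Sum>i\<in>I. g i (X i))\<^sup>2 \<partial>Pi\<^sub>M I M) = (\<Sum>i\<in>I. \<integral>x. (g i x)\<^sup>2 \<partial>M i)"
    using fin by simp
qed

lemma
  fixes M :: "'i \<Rightarrow> 'a measure" and Y :: "'i \<Rightarrow> 'a \<Rightarrow> real^'n"
  assumes fin: "finite I" and ps: "\<And>i. prob_space (M i)"
    and int1: "\<And>i a. i \<in> I \<Longrightarrow> integrable (M i) (\<lambda>x. Y i x $ a)"
    and int2: "\<And>i a. i \<in> I \<Longrightarrow> integrable (M i) (\<lambda>x. (Y i x $ a)\<^sup>2)"
    and mean: "\<And>i a. i \<in> I \<Longrightarrow> (\<integral>x. Y i x $ a \<partial>M i) = 0"
  shows integrable_norm_square_sum_indep: "integrable (Pi\<^sub>M I M) (\<lambda>X. (norm (\<Sum>i\<in>I. Y i (X i)))\<^sup>2)"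
    and integral_norm_square_sum_indep:
      "(\<integral>X. (norm (\<Sum>i\<in>I. Y i (X i)))\<^sup>2 \<partial>Pi\<^sub>M I M) = (\<Sum>i\<in>I. \<integral>x. (norm (Y i x))\<^sup>2 \<partial>M i)"
proof -
  have norm_sum: "(norm (\<Sum>i\<in>I. Y i (X i)))\<^sup>2 = (\<Sum>a\<in>UNIV. (\<Sum>i\<in>I. Y i (X i) $ a)\<^sup>2)" for X
    by (simp add: power2_norm_vec sum_component)
  have components: "integrable (Pi\<^sub>M I M) (\<lambda>X. (\<Sum>i\<in>I. Y i (X i) $ a)\<^sup>2)"
    "(\<integral>X. (\<Sum>i\<in>I. Y i (X i) $ a)\<^sup>2 \<partial>Pi\<^sub>M I M) = (\<Sum>i\<in>I. \<integral>x. (Y i x $ a)\<^sup>2 \<partial>M i)" for a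
    by (rule integrable_square_sum_indep integral_square_sum_indep[where g="\<lambda>i x. Y i x $ a"],
        simp_all add: fin ps int1 int2 mean)+
  show "integrable (Pi\<^sub>M I M) (\<lambda>X. (norm (\<Sum>i\<in>I. Y i (X i)))\<^sup>2)"
    unfolding norm_sum by (intro Bochner_Integration.integrable_sum components)
  have "(\<integral>X. (norm (\<Sum>i\<in>I. Y i (X i)))\<^sup>2 \<partial>Pi\<^sub>M I M) = (\<Sum>a\<in>UNIV. \<Sum>i\<in>I. \<integral>x. (Y i x $ a)\<^sup>2 \<partial>M i)"
    unfolding norm_sum by (simp add: Bochner_Integration.integral_sum components)
  also have "\<dots> = (\<Sum>i\<in>I. \<integral>x. (norm (Y i x))\<^sup>2 \<partial>M i)"
    by (subst sum.swap) (simp add: power2_norm_vec Bochner_Integration.integral_sum int2)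
  finally show "(\<integral>X. (norm (\<Sum>i\<in>I. Y i (X i)))\<^sup>2 \<partial>Pi\<^sub>M I M) = (\<Sum>i\<in>I. \<integral>x. (norm (Y i x))\<^sup>2 \<partial>M i)" .
qed

section \<open>Compositions and labellings\<close>

lemma exists_labelling_card_eq:
  fixes k :: "'d::finite \<Rightarrow> nat"
  shows "\<exists>lab :: nat \<Rightarrow> 'd. \<forall>i. card {m. m < sum k UNIV \<and> lab m = i} = k i"
proof -
  let ?B = "SIGMA i:UNIV. {..<k i}"
  have "card {..<sum k UNIV} = card ?B"
    by (simp add: card_SigmaI)
  then obtain f where f: "bij_betw f {..<sum k UNIV} ?B"
    using finite_same_card_bij[of "{..<sum k UNIV}" ?B] by auto
  have "card {m \<in> {..<sum k UNIV}. fst (f m) = i} = card {p \<in> ?B. fst p = i}" for i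
    by (rule bij_betw_same_card[OF bij_betw_Collect[OF f]]) simp
  moreover have "{p \<in> ?B. fst p = i} = {i} \<times> {..<k i}" for i
    by auto
  ultimately have "card {m. m < sum k UNIV \<and> fst (f m) = i} = k i" for i
    by simp
  then show ?thesis
    by (intro exI[of _ "\<lambda>m. fst (f m)"]) simp
qed

lemma card_labelling:
  fixes \<theta> :: "real^'d"
  assumes "\<theta> \<in> Theta_n n"
  shows "real (card {m. m < n \<and> labelling n \<theta> m = i}) = real n * \<theta> $ i"
proof -
  have "\<forall>i. \<exists>k::nat. real n * \<theta> $ i = real k"
    using assms by (simp add: Theta_n_def)
  then obtain k :: "'d \<Rightarrow> nat" where k: "\<And>i. real n * \<theta> $ i = real (k i)"
    by metis
  have "real (sum k UNIV) = real n * (\<Sum>i\<in>UNIV. \<theta> $ i)"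
    by (simp add: k sum_distrib_left)
  then have "real (sum k UNIV) = real n"
    using assms by (simp add: Theta_n_def prob_simplex_def)
  then obtain lab :: "nat \<Rightarrow> 'd" where lab: "\<And>i. card {m. m < n \<and> lab m = i} = k i"
    using exists_labelling_card_eq[of k] by (auto simp only: of_nat_eq_iff)
  then have "\<exists>lab. \<forall>i. real (card {m. m < n \<and> lab m = i}) = real n * \<theta> $ i"
    by (auto simp: k)
  then have "\<forall>i. real (card {m. m < n \<and> labelling n \<theta> m = i}) = real n * \<theta> $ i"
    unfolding labelling_def by (rule someI_ex)
  then show ?thesis
    by blast
qed

lemma sum_labelling:
  fixes f :: "'d::finite \<Rightarrow> real" and lab :: "nat \<Rightarrow> 'd"
  shows "(\<Sum>m<n. f (lab m)) = (\<Sum>i\<in>UNIV. real (card {m. m < n \<and> lab m = i}) * f i)"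
proof -
  have "(\<Sum>m<n. f (lab m)) = (\<Sum>i\<in>UNIV. \<Sum>m\<in>{m \<in> {..<n}. lab m = i}. f (lab m))"
    by (rule sum.group[symmetric]) auto
  also have "\<dots> = (\<Sum>i\<in>UNIV. \<Sum>m\<in>{m. m < n \<and> lab m = i}. f i)"
    by (intro sum.cong) auto
  finally show ?thesis
    by simp
qed

lemma axis_in_Theta_n: "n \<ge> 1 \<Longrightarrow> (axis j 1 :: real^'d) \<in> Theta_n n"
  unfolding Theta_n_def prob_simplex_def
  by (auto simp: axis_def intro: exI[of _ n] exI[of _ 0])

section \<open>The frame H\<close>

context
  fixes H :: "real^'k^'d"
  assumes valid: "valid_H H"
begin

lemma transpose_H_mult_H: "transpose H ** H = mat 1"
  using valid unfolding valid_H_def by auto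

lemma transpose_H_mult_H_vec: "transpose H *v (H *v v) = v"
  by (simp add: matrix_vector_mul_assoc transpose_H_mult_H)

lemma sum_H_mult_vec: "(\<Sum>c\<in>UNIV. (H *v v) $ c) = 0"
  using valid unfolding valid_H_def by blast

lemma sum_column_H: "(\<Sum>c\<in>UNIV. H $ c $ a) = 0"
  using sum_H_mult_vec[of "axis a 1"]
  by (simp add: matrix_vector_mult_def axis_def if_distrib cong: if_cong)

lemma H_mult_transpose_H_vec:
  "H *v (transpose H *v u) = u - ((\<Sum>c\<in>UNIV. u $ c) / real CARD('d)) *\<^sub>R vec 1"
proof -
  define m where "m = (\<Sum>c\<in>UNIV. u $ c) / real CARD('d)"
  have "(\<Sum>c\<in>UNIV. (u - m *\<^sub>R vec 1) $ c) = 0"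
    by (simp add: m_def sum_subtractf)
  then obtain w where w: "u - m *\<^sub>R vec 1 = H *v w"
    using valid unfolding valid_H_def by (metis (mono_tags, lifting) imageE mem_Collect_eq)
  have "transpose H *v vec 1 = 0"
    by (simp add: vec_eq_iff matrix_vector_mult_def transpose_def sum_column_H)
  moreover have "u = H *v w + m *\<^sub>R vec 1"
    using w by (metis diff_add_cancel)
  ultimately have "transpose H *v u = w"
    by (simp add: matrix_vector_right_distrib matrix_vector_mult_scaleR transpose_H_mult_H_vec)
  then show ?thesis using w by (simp add: m_def)
qed

lemma inner_gamma: "gamma H i \<bullet> x = (H *v x) $ i"
  by (simp add: gamma_def inner_vec_def matrix_vector_mult_def transpose_def axis_def
      if_distrib cong: if_cong)

lemma inner_H_mult_vec: "(H *v v) \<bullet> (H *v w) = v \<bullet> w"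
proof -
  have "(H *v v) \<bullet> (H *v w) = ((H *v w) v* H) \<bullet> v"
    by (subst dot_lmul_matrix) (rule inner_commute)
  also have "(H *v w) v* H = w"
    by (simp flip: transpose_matrix_vector add: transpose_H_mult_H_vec)
  finally show ?thesis by (simp add: inner_commute)
qed

lemma norm_H_mult_vec: "norm (H *v v) = norm v"
  by (simp add: norm_eq_sqrt_inner inner_H_mult_vec)

lemma inner_gamma_gamma: "gamma H i \<bullet> gamma H j = (if i = j then 1 else 0) - 1 / real CARD('d)"
proof -
  have "gamma H i \<bullet> gamma H j = (H *v (transpose H *v axis j 1)) $ i"
    by (simp only: inner_gamma) (simp add: gamma_def)
  then show ?thesis
    by (simp add: H_mult_transpose_H_vec axis_def)
qed

lemma sum_inner_gamma: "(\<Sum>i\<in>UNIV. gamma H i \<bullet> x) = 0"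
  by (simp add: inner_gamma sum_H_mult_vec)

lemma H_mult_P_perm:
  assumes "\<pi> permutes UNIV"
  shows "H *v (P_perm H \<pi> *v x) = (\<chi> i. (H *v x) $ inv \<pi> i)"
proof -
  let ?y = "H *v x"
  have "(\<Sum>c\<in>UNIV. ?y $ inv \<pi> c) = 0"
    by (simp add: sum_comp_permutes_UNIV[OF permutes_inv[OF assms]] sum_H_mult_vec)
  then show ?thesis
    by (simp add: P_perm_def matrix_vector_mul_assoc[symmetric] perm_mat_mult_vec[OF assms]
        H_mult_transpose_H_vec)
qed

lemma inner_gamma_P_perm:
  assumes "\<pi> permutes UNIV"
  shows "gamma H i \<bullet> (P_perm H \<pi> *v x) = gamma H (inv \<pi> i) \<bullet> x"
  by (simp add: inner_gamma H_mult_P_perm[OF assms])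

lemma norm_P_perm:
  assumes "\<pi> permutes UNIV"
  shows "norm (P_perm H \<pi> *v x) = norm x"
proof -
  let ?y = "H *v x"
  have "(\<Sum>i\<in>UNIV. (?y $ inv \<pi> i)\<^sup>2) = (\<Sum>i\<in>UNIV. (?y $ i)\<^sup>2)"
    by (rule sum_comp_permutes_UNIV[OF permutes_inv[OF assms]])
  then have "norm (\<chi> i. ?y $ inv \<pi> i) = norm ?y"
    by (simp add: norm_vec_def L2_set_def)
  then show ?thesis
    by (metis H_mult_P_perm[OF assms] norm_H_mult_vec)
qed

lemma P_perm_mult_vec_nth:
  assumes "\<pi> permutes UNIV"
  shows "(P_perm H \<pi> *v x) $ a = (\<Sum>c\<in>UNIV. H $ c $ a * (H *v x) $ inv \<pi> c)"
proof -
  have "P_perm H \<pi> *v x = transpose H *v (\<chi> c. (H *v x) $ inv \<pi> c)"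
    by (metis H_mult_P_perm[OF assms] transpose_H_mult_H_vec)
  then show ?thesis
    by (simp add: matrix_vector_mult_def transpose_def)
qed

lemma sum_perms_inner_gamma_P_perm: "(\<Sum>\<pi>\<in>perms. gamma H i \<bullet> (P_perm H \<pi> *v x)) = 0"
proof -
  have "(\<Sum>\<pi>\<in>perms. gamma H i \<bullet> (P_perm H \<pi> *v x)) = (\<Sum>\<pi>\<in>perms. (H *v x) $ inv \<pi> i)"
    by (rule sum.cong[OF refl]) (simp add: inner_gamma H_mult_P_perm)
  also have "\<dots> = (\<Sum>\<pi>\<in>perms. (H *v x) $ \<pi> i)"
    by (rule sum_permutations_inverse[symmetric])
  finally show ?thesis
    by (simp add: sum_perms_apply sum_H_mult_vec)
qed

lemma sum_perms_H_mult_vec_nth_mult: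
  "(\<Sum>\<pi>\<in>perms. (H *v x) $ inv \<pi> c * (H *v x) $ inv \<pi> e) =
    fact CARD('d) * (norm x)\<^sup>2 * (if c = e then 1 / CARD('d) else - 1 / (CARD('d) * (CARD('d) - 1)))"
proof -
  have "(\<Sum>\<pi>\<in>perms. (H *v x) $ inv \<pi> c * (H *v x) $ inv \<pi> e) =
      (\<Sum>\<pi>\<in>perms. (H *v x) $ \<pi> c * (H *v x) $ \<pi> e)"
    by (rule sum_permutations_inverse[symmetric])
  moreover have "(norm x)\<^sup>2 = (\<Sum>j\<in>UNIV. ((H *v x) $ j)\<^sup>2)"
    by (simp flip: norm_H_mult_vec add: power2_norm_vec)
  ultimately show ?thesis
    using sum_perms_apply[of "\<lambda>j. ((H *v x) $ j)\<^sup>2" c]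
      sum_perms_apply_mult_distinct[of "\<lambda>j. (H *v x) $ j" c e]
    by (cases "c = e") (simp_all add: sum_H_mult_vec power2_eq_square)
qed

text \<open>The cross terms collapse because the columns of H are orthonormal and sum to zero.\<close>
lemma sum_perms_P_perm_mult_nth:
  assumes "CARD('d) \<ge> 2"
  shows "(\<Sum>\<pi>\<in>perms. (P_perm H \<pi> *v x) $ a * (P_perm H \<pi> *v x) $ b) =
    fact CARD('d) * (if a = b then (norm x)\<^sup>2 / (real CARD('d) - 1) else 0)"
proof -
  define F :: real where "F = fact CARD('d)"
  define A where "A = (norm x)\<^sup>2 / CARD('d)"
  define B where "B = - (norm x)\<^sup>2 / (CARD('d) * (CARD('d) - 1))"
  let ?y = "\<lambda>c \<pi>. (H *v x) $ inv \<pi> c"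
  have "(\<Sum>\<pi>\<in>perms. (P_perm H \<pi> *v x) $ a * (P_perm H \<pi> *v x) $ b)
      = (\<Sum>\<pi>\<in>perms. \<Sum>c\<in>UNIV. \<Sum>e\<in>UNIV. H$c$a * H$e$b * (?y c \<pi> * ?y e \<pi>))"
    by (rule sum.cong[OF refl]) (simp add: P_perm_mult_vec_nth sum_product mult_ac)
  also have "\<dots> = (\<Sum>c\<in>UNIV. \<Sum>e\<in>UNIV. H$c$a * H$e$b * (\<Sum>\<pi>\<in>perms. ?y c \<pi> * ?y e \<pi>))"
    by (simp add: sum_distrib_left sum.swap[of _ perms])
  also have "\<dots> = F * B * ((\<Sum>c\<in>UNIV. H$c$a) * (\<Sum>e\<in>UNIV. H$e$b))
        + F * (A - B) * (\<Sum>c\<in>UNIV. H$c$a * H$c$b)"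
  proof -
    have "H$c$a * H$e$b * (\<Sum>\<pi>\<in>perms. ?y c \<pi> * ?y e \<pi>) =
      F * B * (H$c$a * H$e$b) + (if c = e then F * (A - B) * (H$c$a * H$c$b) else 0)" for c e
      by (simp add: sum_perms_H_mult_vec_nth_mult F_def A_def B_def algebra_simps)
    then show ?thesis
      by (simp add: sum.distrib sum_product flip: sum_distrib_left)
  qed
  also have "(\<Sum>c\<in>UNIV. H$c$a * H$c$b) = mat 1 $ a $ b"
    by (simp flip: transpose_H_mult_H add: matrix_matrix_mult_def transpose_def)
  also have "A - B = (norm x)\<^sup>2 / (CARD('d) - 1)"
    using assms by (simp add: A_def B_def field_simps)
  finally show ?thesis
    by (simp add: sum_column_H F_def mat_def)
qed

lemma P_perm_Xd:
  assumes "\<pi> permutes UNIV" "x \<in> Xd H"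
  shows "P_perm H \<pi> *v x \<in> Xd H"
  using assms by (simp add: Xd_def inner_gamma_P_perm)

text \<open>On X_d the coordinates of y = H x are at least -1 and sum to 0, so |y_i| \<le> y_i + 2.\<close>
lemma compact_Xd: "compact (Xd H)"
proof -
  have "norm x \<le> 2 * real CARD('d)" if "x \<in> Xd H" for x
  proof -
    let ?y = "H *v x"
    have "\<bar>?y $ i\<bar> \<le> ?y $ i + 2" for i
      using that by (simp add: Xd_def inner_gamma) (smt (verit))
    then have "(\<Sum>i\<in>UNIV. \<bar>?y $ i\<bar>) \<le> (\<Sum>i\<in>UNIV. ?y $ i + 2)"
      by (rule sum_mono)
    then have "(\<Sum>i\<in>UNIV. \<bar>?y $ i\<bar>) \<le> 2 * real CARD('d)"
      by (simp add: sum.distrib sum_H_mult_vec)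
    then show ?thesis
      using norm_le_l1_cart[of ?y] by (simp add: norm_H_mult_vec)
  qed
  then have "bounded (Xd H)"
    unfolding bounded_iff by blast
  moreover have "closed (Xd H)"
    unfolding Xd_def by (intro closed_Collect_all closed_Collect_le continuous_intros)
  ultimately show ?thesis
    by (simp add: compact_eq_bounded_closed)
qed

lemma Xd_borel: "Xd H \<in> sets borel"
  by (simp add: borel_closed compact_imp_closed compact_Xd)

end

section \<open>The symmetrised law\<close>

lemma sym_law_eq_mixture:
  fixes H :: "real^'k^'d"
  assumes sets_\<rho>: "sets \<rho> = sets borel" and \<rho>: "sigma_finite_measure \<rho>"
  shows "sym_law H \<rho> = distr (uniform_count_measure perms \<Otimes>\<^sub>M \<rho>) borel (\<lambda>(\<pi>, x). P_perm H \<pi> *v x)"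
    (is "_ = ?S")
proof -
  have emeasure_S: "emeasure ?S A =
      (\<Sum>\<pi>\<in>perms. emeasure (distr \<rho> borel (\<lambda>x. P_perm H \<pi> *v x)) A) / of_nat (fact CARD('d))"
    if A: "A \<in> sets borel" for A
  proof -
    have "emeasure ?S A = (\<integral>\<^sup>+y. indicator A y \<partial>?S)"
      using A by simp
    also have "\<dots> = ennreal (1 / fact CARD('d)) *
        (\<Sum>\<pi>\<in>perms. emeasure (distr \<rho> borel (\<lambda>x. P_perm H \<pi> *v x)) A)"
      using A
      by (simp add: nn_integral_uniform_mixture[OF _ \<rho>] borel_measurable_matrix_vector_mult[OF sets_\<rho>]
          card_perms nn_integral_distr flip: nn_integral_indicator)
    also have "ennreal (1 / fact CARD('d)) = 1 / of_nat (fact CARD('d))"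
      by (metis divide_ennreal ennreal_1 ennreal_of_nat_eq_real_of_nat fact_gt_zero
          of_nat_0_less_iff zero_less_one_class.zero_le_one of_nat_fact)
    finally show ?thesis
      by (simp add: divide_ennreal_def mult.commute)
  qed
  have "sym_law H \<rho> = measure_of UNIV (sets borel) (emeasure ?S)"
    unfolding sym_law_def
    by (rule measure_of_eq) (simp_all add: emeasure_S sets.sigma_sets_eq[of borel, simplified])
  also have "\<dots> = ?S"
    using measure_of_of_measure[of ?S] by simp
  finally show ?thesis .
qed

lemma sets_sym_law [simp, measurable_cong]: "sets (sym_law H \<rho>) = sets borel"
  by (simp add: sym_law_def sets.sigma_sets_eq[of borel, simplified])

lemma nn_integral_sym_law:
  fixes H :: "real^'k^'d"
  assumes "sets \<rho> = sets borel" "sigma_finite_measure \<rho>" "f \<in> borel_measurable borel"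
  shows "(\<integral>\<^sup>+x. f x \<partial>sym_law H \<rho>) =
    ennreal (1 / fact CARD('d)) * (\<Sum>\<pi>\<in>perms. \<integral>\<^sup>+x. f (P_perm H \<pi> *v x) \<partial>\<rho>)"
  using assms by (simp add: sym_law_eq_mixture nn_integral_uniform_mixture card_perms
      borel_measurable_matrix_vector_mult)

lemma integral_sym_law:
  fixes H :: "real^'k^'d" and f :: "real^'k \<Rightarrow> 'b::{banach, second_countable_topology}"
  assumes "sets \<rho> = sets borel" "sigma_finite_measure \<rho>" "f \<in> borel_measurable borel"
    and "\<And>\<pi>. \<pi> permutes UNIV \<Longrightarrow> integrable \<rho> (\<lambda>x. f (P_perm H \<pi> *v x))"
  shows "(\<integral>x. f x \<partial>sym_law H \<rho>) =
    (1 / fact CARD('d)) *\<^sub>R (\<Sum>\<pi>\<in>perms. \<integral>x. f (P_perm H \<pi> *v x) \<partial>\<rho>)"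
proof -
  have "finite (perms :: ('d \<Rightarrow> 'd) set)"
    by (simp add: finite_permutations)
  from integral_uniform_mixture[OF this assms(2) borel_measurable_matrix_vector_mult[OF assms(1)] assms(3)]
  show ?thesis
    using assms(4) by (simp add: sym_law_eq_mixture[OF assms(1,2)] card_perms)
qed

lemma prob_space_sym_law:
  fixes H :: "real^'k^'d"
  assumes "prob_space \<rho>" "sets \<rho> = sets borel"
  shows "prob_space (sym_law H \<rho>)"
proof -
  have "prob_space (uniform_count_measure (perms :: ('d \<Rightarrow> 'd) set))"
    by (rule prob_space_uniform_count_measure) (auto intro: permutes_id)
  then interpret pair_prob_space "uniform_count_measure (perms :: ('d \<Rightarrow> 'd) set)" \<rho>
    using assms(1) by (simp add: pair_prob_space_def pair_sigma_finite_def prob_space_imp_sigma_finite)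
  show ?thesis
    using assms
    by (simp add: sym_law_eq_mixture prob_space_imp_sigma_finite prob_space_distr
        measurable_uniform_count_measure_pair borel_measurable_matrix_vector_mult)
qed

definition law_on_Xd :: "real^'k^'d \<Rightarrow> (real^'k) measure \<Rightarrow> bool" where
  "law_on_Xd H \<mu> \<longleftrightarrow> prob_space \<mu> \<and> sets \<mu> = sets borel \<and> (AE x in \<mu>. x \<in> Xd H)"

context
  fixes H :: "real^'k^'d"
  assumes valid: "valid_H H"
begin

lemma integrable_law_on_Xd:
  fixes f :: "real^'k \<Rightarrow> 'b::{banach, second_countable_topology}"
  assumes "law_on_Xd H \<mu>" "continuous_on UNIV f"
  shows "integrable \<mu> f"
  using assms compact_Xd[OF valid]
  by (intro integrable_continuous_AE_in_compact[where K = "Xd H"])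
    (simp_all add: law_on_Xd_def prob_space.finite_measure)

lemma anchored_iff_law_on_Xd: "anchored H \<mu> \<longleftrightarrow> law_on_Xd H \<mu> \<and> integral\<^sup>L \<mu> (\<lambda>x. x) = 0"
proof -
  have "emeasure \<mu> (Xd H) = 1 \<longleftrightarrow> (AE x in \<mu>. x \<in> Xd H)"
    if "prob_space \<mu>" "sets \<mu> = sets borel"
    using prob_space.AE_in_set_eq_1[OF that(1), of "Xd H"] that Xd_borel[OF valid]
    by (simp add: finite_measure.emeasure_eq_measure prob_space.finite_measure)
  then show ?thesis
    unfolding anchored_def law_on_Xd_def
    by (auto intro: integrable_law_on_Xd[unfolded law_on_Xd_def] continuous_on_id)
qed

lemma law_on_Xd_sym_law:
  assumes "law_on_Xd H \<rho>"
  shows "law_on_Xd H (sym_law H \<rho>)"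
proof -
  have \<rho>: "prob_space \<rho>" "sets \<rho> = sets borel" and Xd: "AE x in \<rho>. x \<in> Xd H"
    using assms by (auto simp: law_on_Xd_def)
  have "(\<integral>\<^sup>+x. indicator (- Xd H) (P_perm H \<pi> *v x) \<partial>\<rho>) = 0" if "\<pi> permutes UNIV" for \<pi>
  proof (subst nn_integral_0_iff_AE)
    show "(\<lambda>x. indicator (- Xd H) (P_perm H \<pi> *v x) :: ennreal) \<in> borel_measurable \<rho>"
      using Xd_borel[OF valid] by (intro measurable_compose[OF borel_measurable_matrix_vector_mult[OF \<rho>(2)]
          borel_measurable_indicator]) (simp add: borel_comp)
    show "AE x in \<rho>. (indicator (- Xd H) (P_perm H \<pi> *v x) :: ennreal) = 0"
      using Xd by (rule eventually_mono) (simp add: P_perm_Xd[OF valid that])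
  qed
  moreover have "(\<integral>\<^sup>+x. indicator (- Xd H) x \<partial>sym_law H \<rho>) = ennreal (1 / fact CARD('d)) *
      (\<Sum>\<pi>\<in>perms. \<integral>\<^sup>+x. indicator (- Xd H) (P_perm H \<pi> *v x) \<partial>\<rho>)"
    using \<rho> Xd_borel[OF valid] by (intro nn_integral_sym_law) (simp_all add: prob_space_imp_sigma_finite borel_comp)
  ultimately have "(\<integral>\<^sup>+x. indicator (- Xd H) x \<partial>sym_law H \<rho>) = 0"
    by simp
  then have "AE x in sym_law H \<rho>. indicator (- Xd H) x = (0 :: ennreal)"
    using Xd_borel[OF valid] by (subst (asm) nn_integral_0_iff_AE) (auto simp: borel_comp)
  then have "AE x in sym_law H \<rho>. x \<in> Xd H"
    by (rule eventually_mono) (simp split: split_indicator_asm)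
  then show ?thesis
    using \<rho> by (simp add: law_on_Xd_def prob_space_sym_law)
qed

lemma integral_sym_law_continuous:
  fixes f :: "real^'k \<Rightarrow> 'b::{banach, second_countable_topology}"
  assumes "law_on_Xd H \<rho>" "continuous_on UNIV f"
  shows "(\<integral>x. f x \<partial>sym_law H \<rho>) =
    (1 / fact CARD('d)) *\<^sub>R (\<Sum>\<pi>\<in>perms. \<integral>x. f (P_perm H \<pi> *v x) \<partial>\<rho>)"
proof (rule integral_sym_law)
  show "sets \<rho> = sets borel" "sigma_finite_measure \<rho>"
    using assms(1) by (simp_all add: law_on_Xd_def prob_space_imp_sigma_finite)
  show "f \<in> borel_measurable borel"
    using assms(2) by (rule borel_measurable_continuous_onI)
  show "integrable \<rho> (\<lambda>x. f (P_perm H \<pi> *v x))" for \<pi>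
    using assms(1) continuous_on_compose2[OF assms(2) matrix_vector_mult_linear_continuous_on]
    by (rule integrable_law_on_Xd) simp
qed

lemma anchored_sym_law:
  assumes "anchored H \<rho>"
  shows "anchored H (sym_law H \<rho>)"
proof -
  have \<rho>: "law_on_Xd H \<rho>" and mean: "integral\<^sup>L \<rho> (\<lambda>x. x) = 0"
    using assms by (auto simp: anchored_iff_law_on_Xd)
  have "(\<integral>x. P_perm H \<pi> *v x \<partial>\<rho>) = P_perm H \<pi> *v integral\<^sup>L \<rho> (\<lambda>x. x)" for \<pi>
    by (rule integral_bounded_linear[OF matrix_vector_mul_bounded_linear])
      (rule integrable_law_on_Xd[OF \<rho> continuous_on_id])
  then have "integral\<^sup>L (sym_law H \<rho>) (\<lambda>x. x) = 0"
    by (simp add: integral_sym_law_continuous[OF \<rho> continuous_on_id] mean)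
  then show ?thesis
    using law_on_Xd_sym_law[OF \<rho>] by (simp add: anchored_iff_law_on_Xd)
qed

end

section \<open>Budget and second moments\<close>

context
  fixes H :: "real^'k^'d"
  assumes valid: "valid_H H"
begin

lemma chi_integrand_P_perm:
  assumes "\<pi> permutes UNIV"
  shows "chi_integrand H i j (P_perm H \<pi> *v x) = chi_integrand H (inv \<pi> i) (inv \<pi> j) x"
  unfolding chi_integrand_def by (simp add: inner_diff_left inner_gamma_P_perm[OF valid assms])

lemma chi_star_sym_law_le:
  assumes "CARD('d) \<ge> 2" "prob_space \<rho>" "sets \<rho> = sets borel"
  shows "chi_star H (sym_law H \<rho>) \<le> chi_star H \<rho>"
proof -
  have budget_le: "(\<integral>\<^sup>+x. chi_integrand H i j x \<partial>\<mu>) \<le> chi_star H \<mu>" if "i \<noteq> j" for i j \<mu>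
    unfolding chi_star_def by (rule Max_ge) (use that in auto)
  have "(\<integral>\<^sup>+x. chi_integrand H i j x \<partial>sym_law H \<rho>) \<le> chi_star H \<rho>" if "i \<noteq> j" for i j
  proof -
    have "(\<integral>\<^sup>+x. chi_integrand H i j x \<partial>sym_law H \<rho>) =
        ennreal (1 / fact CARD('d)) * (\<Sum>\<pi>\<in>perms. \<integral>\<^sup>+x. chi_integrand H i j (P_perm H \<pi> *v x) \<partial>\<rho>)"
      using assms(2,3) by (intro nn_integral_sym_law)
        (simp_all add: prob_space_imp_sigma_finite chi_integrand_def)
    also have "\<dots> \<le> ennreal (1 / fact CARD('d)) * (\<Sum>\<pi>\<in>(perms :: ('d \<Rightarrow> 'd) set). chi_star H \<rho>)"
    proof (intro mult_left_mono sum_mono)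
      fix \<pi> :: "'d \<Rightarrow> 'd"
      assume "\<pi> \<in> perms"
      then have \<pi>: "\<pi> permutes UNIV" by simp
      then have "inv \<pi> i \<noteq> inv \<pi> j"
        using \<open>i \<noteq> j\<close> permutes_inv_eq by metis
      then show "(\<integral>\<^sup>+x. chi_integrand H i j (P_perm H \<pi> *v x) \<partial>\<rho>) \<le> chi_star H \<rho>"
        by (simp add: chi_integrand_P_perm[OF \<pi>] budget_le)
    qed simp
    also have "\<dots> = chi_star H \<rho>"
      by (simp add: card_perms ennreal_of_nat_eq_real_of_nat mult.assoc[symmetric]
          flip: ennreal_mult'')
    finally show ?thesis .
  qed
  moreover obtain i j :: 'd where "i \<noteq> j"
    using assms(1) card_le_Suc0_iff_eq[of "UNIV :: 'd set"] by auto
  ultimately show ?thesis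
    unfolding chi_star_def[of H "sym_law H \<rho>"] by (intro Max.boundedI) auto
qed

lemma trace_Sigma_mat:
  assumes "law_on_Xd H \<rho>"
  shows "trace (Sigma_mat \<rho>) = (\<integral>x. (norm x)\<^sup>2 \<partial>\<rho>)"
proof -
  have "trace (Sigma_mat \<rho>) = (\<Sum>a\<in>UNIV. \<integral>x. x $ a * x $ a \<partial>\<rho>)"
    by (simp add: trace_def Sigma_mat_def)
  also have "\<dots> = (\<integral>x. (\<Sum>a\<in>UNIV. x $ a * x $ a) \<partial>\<rho>)"
    by (rule Bochner_Integration.integral_sum[symmetric], rule integrable_law_on_Xd[OF valid assms])
      (intro continuous_intros)
  finally show ?thesis
    by (simp add: power2_norm_eq_inner inner_vec_def)
qed

lemma Sigma_mat_sym_law: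
  assumes "CARD('d) \<ge> 2" "law_on_Xd H \<rho>"
  shows "Sigma_mat (sym_law H \<rho>) = (trace (Sigma_mat \<rho>) / real (CARD('d) - 1)) *\<^sub>R mat 1"
proof -
  have "(\<integral>x. x $ a * x $ b \<partial>sym_law H \<rho>) =
      (if a = b then (\<integral>x. (norm x)\<^sup>2 \<partial>\<rho>) / (real CARD('d) - 1) else 0)" for a b
  proof -
    have "(\<integral>x. x $ a * x $ b \<partial>sym_law H \<rho>) =
      (1 / fact CARD('d)) * (\<Sum>\<pi>\<in>perms. \<integral>x. (P_perm H \<pi> *v x) $ a * (P_perm H \<pi> *v x) $ b \<partial>\<rho>)"
      using integral_sym_law_continuous[OF valid assms(2), of "\<lambda>x. x $ a * x $ b"]
      by (simp add: continuous_on_mult continuous_on_component)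
    also have "(\<Sum>\<pi>\<in>perms. \<integral>x. (P_perm H \<pi> *v x) $ a * (P_perm H \<pi> *v x) $ b \<partial>\<rho>) =
        (\<integral>x. (\<Sum>\<pi>\<in>perms. (P_perm H \<pi> *v x) $ a * (P_perm H \<pi> *v x) $ b) \<partial>\<rho>)"
      by (rule Bochner_Integration.integral_sum[symmetric], rule integrable_law_on_Xd[OF valid assms(2)])
        (intro continuous_intros)
    also have "\<dots> = fact CARD('d) * (if a = b then (\<integral>x. (norm x)\<^sup>2 \<partial>\<rho>) / (real CARD('d) - 1) else 0)"
      by (simp add: sum_perms_P_perm_mult_nth[OF valid assms(1)])
    finally show ?thesis
      by simp
  qed
  then show ?thesis
    using assms(1) unfolding Sigma_mat_def[of "sym_law H \<rho>"]
    by (simp add: vec_eq_iff mat_def trace_Sigma_mat[OF assms(2)] of_nat_diff)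
qed

lemma integral_inner_matrix_vector_mult:
  assumes "law_on_Xd H \<rho>"
  shows "(\<integral>x. (A *v x) \<bullet> x \<partial>\<rho>) = trace (A ** Sigma_mat \<rho>)"
proof -
  have int: "integrable \<rho> (\<lambda>x. A $ a $ b * (x $ b * x $ a))" for a b
    using assms by (rule integrable_law_on_Xd[OF valid]) (intro continuous_intros)
  have "(\<integral>x. (A *v x) \<bullet> x \<partial>\<rho>) = (\<integral>x. (\<Sum>a\<in>UNIV. \<Sum>b\<in>UNIV. A $ a $ b * (x $ b * x $ a)) \<partial>\<rho>)"
    by (simp add: inner_vec_def matrix_vector_mult_def sum_distrib_right mult.assoc)
  also have "\<dots> = (\<Sum>a\<in>UNIV. \<Sum>b\<in>UNIV. A $ a $ b * (\<integral>x. x $ b * x $ a \<partial>\<rho>))"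
    using int by (simp add: Bochner_Integration.integral_sum Bochner_Integration.integrable_sum)
  finally show ?thesis
    by (simp add: trace_def matrix_matrix_mult_def Sigma_mat_def)
qed

lemma integral_weighted_norm_square_sym_law:
  assumes "law_on_Xd H \<rho>"
  shows "(\<integral>x. (1 + gamma H i \<bullet> x) * (norm x)\<^sup>2 \<partial>sym_law H \<rho>) = (\<integral>x. (norm x)\<^sup>2 \<partial>\<rho>)"
proof -
  have average: "(\<Sum>\<pi>\<in>perms. (1 + gamma H i \<bullet> (P_perm H \<pi> *v x)) * (norm x)\<^sup>2) =
      fact CARD('d) * (norm x)\<^sup>2" for x
    by (simp add: sum_distrib_right[symmetric] sum.distrib sum_perms_inner_gamma_P_perm[OF valid]
        card_perms)
  have "(\<integral>x. (1 + gamma H i \<bullet> x) * (norm x)\<^sup>2 \<partial>sym_law H \<rho>) =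
      (1 / fact CARD('d)) * (\<Sum>\<pi>\<in>perms. \<integral>x. (1 + gamma H i \<bullet> (P_perm H \<pi> *v x)) * (norm x)\<^sup>2 \<partial>\<rho>)"
    using integral_sym_law_continuous[OF valid assms, of "\<lambda>x. (1 + gamma H i \<bullet> x) * (norm x)\<^sup>2"]
    by (simp add: continuous_intros norm_P_perm[OF valid])
  also have "\<dots> = (1 / fact CARD('d)) *
      (\<integral>x. (\<Sum>\<pi>\<in>perms. (1 + gamma H i \<bullet> (P_perm H \<pi> *v x)) * (norm x)\<^sup>2) \<partial>\<rho>)"
    by (subst Bochner_Integration.integral_sum)
      (auto intro!: integrable_law_on_Xd[OF valid assms] continuous_intros)
  finally show ?thesis
    by (simp add: average)
qed

end

section \<open>Fixed-composition risk\<close>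

definition class_variance :: "real^'k^'d \<Rightarrow> (real^'k) measure \<Rightarrow> 'd \<Rightarrow> real" where
  "class_variance H \<mu> i =
    (\<integral>x. (norm (matrix_inv (Sigma_mat \<mu>) *v (x - Sigma_mat \<mu> *v gamma H i)))\<^sup>2 \<partial>W H \<mu> i)"

context
  fixes H :: "real^'k^'d"
  assumes valid: "valid_H H"
begin

lemma AE_1_plus_inner_gamma_nonneg: "law_on_Xd H \<mu> \<Longrightarrow> AE x in \<mu>. 0 \<le> 1 + gamma H i \<bullet> x"
  unfolding law_on_Xd_def by (auto elim: eventually_mono simp: Xd_def)

lemma borel_measurable_1_plus_inner_gamma:
  "sets \<mu> = sets borel \<Longrightarrow> (\<lambda>x. 1 + gamma H i \<bullet> x) \<in> borel_measurable \<mu>"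
  by (rule borel_measurable_sets_eq_borel) simp_all

lemma integral_W:
  fixes f :: "real^'k \<Rightarrow> 'b::{banach, second_countable_topology}"
  assumes "law_on_Xd H \<mu>" "f \<in> borel_measurable borel"
  shows "(\<integral>x. f x \<partial>W H \<mu> i) = (\<integral>x. (1 + gamma H i \<bullet> x) *\<^sub>R f x \<partial>\<mu>)"
proof -
  have sets_\<mu>: "sets \<mu> = sets borel"
    using assms(1) by (simp add: law_on_Xd_def)
  show ?thesis
    unfolding W_def
    by (rule integral_density[OF borel_measurable_sets_eq_borel[OF sets_\<mu> assms(2)]
          borel_measurable_1_plus_inner_gamma[OF sets_\<mu>] AE_1_plus_inner_gamma_nonneg[OF assms(1)]])
qed

lemma law_on_Xd_W:
  assumes "anchored H \<mu>"
  shows "law_on_Xd H (W H \<mu> i)"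
proof -
  have \<mu>: "law_on_Xd H \<mu>" and mean: "integral\<^sup>L \<mu> (\<lambda>x. x) = 0"
    using assms by (simp_all add: anchored_iff_law_on_Xd[OF valid])
  then have sets_\<mu>: "sets \<mu> = sets borel" and "prob_space \<mu>"
    by (simp_all add: law_on_Xd_def)
  have weight: "(\<lambda>x. ennreal (1 + gamma H i \<bullet> x)) \<in> borel_measurable \<mu>"
    using borel_measurable_1_plus_inner_gamma[OF sets_\<mu>] by measurable
  have "integrable \<mu> (\<lambda>x. x)"
    using \<mu> continuous_on_id by (rule integrable_law_on_Xd[OF valid])
  then have "(\<integral>x. 1 + gamma H i \<bullet> x \<partial>\<mu>) = 1"
    using mean \<open>prob_space \<mu>\<close>
    by (simp add: prob_space.finite_measure finite_measure.integrable_const prob_space.prob_space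
        integrable_inner_right integral_inner_right)
  moreover have "integrable \<mu> (\<lambda>x. 1 + gamma H i \<bullet> x)"
    using \<mu> by (rule integrable_law_on_Xd[OF valid]) (intro continuous_intros)
  ultimately have "(\<integral>\<^sup>+x. ennreal (1 + gamma H i \<bullet> x) \<partial>\<mu>) = 1"
    using nn_integral_eq_integral[OF _ AE_1_plus_inner_gamma_nonneg[OF \<mu>]] by simp
  then have "prob_space (W H \<mu> i)"
    unfolding W_def using weight
    by (intro prob_spaceI) (simp add: emeasure_density nn_integral_cong[OF indicator_simps(1)])
  moreover have "AE x in W H \<mu> i. x \<in> Xd H"
    using \<mu> unfolding W_def law_on_Xd_def by (subst AE_density[OF weight]) (auto elim: eventually_mono)
  moreover have "sets (W H \<mu> i) = sets borel"
    using sets_\<mu> by (simp add: W_def)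
  ultimately show ?thesis
    by (simp add: law_on_Xd_def)
qed

lemma integral_W_id:
  assumes "anchored H \<mu>"
  shows "(\<integral>x. x \<partial>W H \<mu> i) = Sigma_mat \<mu> *v gamma H i"
proof -
  have \<mu>: "law_on_Xd H \<mu>" and mean: "integral\<^sup>L \<mu> (\<lambda>x. x) = 0"
    using assms by (simp_all add: anchored_iff_law_on_Xd[OF valid])
  have int: "integrable \<mu> f" if "continuous_on UNIV f" for f :: "real^'k \<Rightarrow> real^'k"
    using \<mu> that by (rule integrable_law_on_Xd[OF valid])
  have "(\<integral>x. x \<partial>W H \<mu> i) = (\<integral>x. x + (gamma H i \<bullet> x) *\<^sub>R x \<partial>\<mu>)"
    by (simp add: integral_W[OF \<mu>] algebra_simps)
  also have "\<dots> = (\<integral>x. (gamma H i \<bullet> x) *\<^sub>R x \<partial>\<mu>)"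
    using int[of "\<lambda>x. x"] int[of "\<lambda>x. (gamma H i \<bullet> x) *\<^sub>R x"] mean
    by (simp add: continuous_intros)
  also have "\<dots> = Sigma_mat \<mu> *v gamma H i"
  proof -
    have "(\<integral>x. (gamma H i \<bullet> x) *\<^sub>R x \<partial>\<mu>) $ a = (\<Sum>b\<in>UNIV. gamma H i $ b * (\<integral>x. x $ a * x $ b \<partial>\<mu>))"
      for a
    proof -
      have "(\<integral>x. (gamma H i \<bullet> x) *\<^sub>R x \<partial>\<mu>) $ a = (\<integral>x. (gamma H i \<bullet> x) * x $ a \<partial>\<mu>)"
        using integral_bounded_linear[OF bounded_linear_vec_nth int[of "\<lambda>x. (gamma H i \<bullet> x) *\<^sub>R x"],
            of a]
        by (simp add: continuous_intros)
      also have "\<dots> = (\<integral>x. (\<Sum>b\<in>UNIV. gamma H i $ b * (x $ a * x $ b)) \<partial>\<mu>)"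
        by (simp add: inner_vec_def sum_distrib_left mult_ac)
      also have "\<dots> = (\<Sum>b\<in>UNIV. gamma H i $ b * (\<integral>x. x $ a * x $ b \<partial>\<mu>))"
      proof -
        have "integrable \<mu> (\<lambda>x. x $ a * x $ b)" for b
          using \<mu> by (rule integrable_law_on_Xd[OF valid]) (intro continuous_intros)
        then show ?thesis
          by (simp add: Bochner_Integration.integral_sum)
      qed
      finally show ?thesis .
    qed
    then show ?thesis
      by (simp add: vec_eq_iff matrix_vector_mult_def Sigma_mat_def mult.commute)
  qed
  finally show ?thesis .
qed


lemma class_variance_eq:
  assumes "anchored H \<mu>" "invertible (Sigma_mat \<mu>)"
  shows "class_variance H \<mu> i =
    (\<integral>x. (1 + gamma H i \<bullet> x) * (norm (matrix_inv (Sigma_mat \<mu>) *v x))\<^sup>2 \<partial>\<mu>) - (1 - 1 / CARD('d))"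
proof -
  let ?B = "matrix_inv (Sigma_mat \<mu>)"
  have \<mu>: "law_on_Xd H \<mu>"
    using assms(1) by (simp add: anchored_iff_law_on_Xd[OF valid])
  have W: "law_on_Xd H (W H \<mu> i)"
    by (rule law_on_Xd_W[OF assms(1)])
  have mean: "(\<integral>x. ?B *v x \<partial>W H \<mu> i) = gamma H i"
    using integral_bounded_linear[OF matrix_vector_mul_bounded_linear
        integrable_law_on_Xd[OF valid W continuous_on_id], of ?B]
    by (simp add: integral_W_id[OF assms(1)] matrix_vector_mul_assoc matrix_inv_left[OF assms(2)])
  have "class_variance H \<mu> i = (\<integral>x. (norm (?B *v x - gamma H i))\<^sup>2 \<partial>W H \<mu> i)"
    using assms(2)
    by (simp add: class_variance_def matrix_vector_mult_diff_distrib matrix_vector_mul_assoc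
        matrix_inv_left)
  also have "\<dots> = (\<integral>x. (norm (?B *v x))\<^sup>2 \<partial>W H \<mu> i) - (norm (gamma H i))\<^sup>2"
    using integral_norm_diff_mean_square[of "W H \<mu> i" "\<lambda>x. ?B *v x"] W mean
    by (simp add: law_on_Xd_def integrable_law_on_Xd[OF valid W] continuous_intros)
  also have "(norm (gamma H i))\<^sup>2 = 1 - 1 / CARD('d)"
    by (simp add: power2_norm_eq_inner inner_gamma_gamma[OF valid])
  also have "(\<integral>x. (norm (?B *v x))\<^sup>2 \<partial>W H \<mu> i) =
      (\<integral>x. (1 + gamma H i \<bullet> x) * (norm (?B *v x))\<^sup>2 \<partial>\<mu>)"
    by (simp add: integral_W[OF \<mu>] borel_measurable_continuous_onI continuous_intros)
  finally show ?thesis .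
qed

lemma theta_hat_class_means:
  assumes "\<theta> \<in> Theta_n n" "n \<ge> 1" "invertible (Sigma_mat \<mu>)"
  shows "theta_hat H \<mu> n (\<lambda>m. Sigma_mat \<mu> *v gamma H (labelling n \<theta> m)) = \<theta>"
proof -
  let ?lab = "labelling n \<theta>"
  have "(\<Sum>m<n. if ?lab m = i then 1 else 0) = real n * \<theta> $ i" for i
    using sum_labelling[where f="\<lambda>j. if j = i then 1 else 0" and lab="?lab" and n=n]
      card_labelling[OF assms(1), of i]
    by (simp add: if_distrib cong: if_cong)
  moreover have "(H *v gamma H j) $ i = (if j = i then 1 else 0) - 1 / CARD('d)" for i j
    by (simp flip: inner_gamma[OF valid] add: inner_gamma_gamma[OF valid] eq_commute)
  ultimately have "(\<Sum>m<n. (H *v gamma H (?lab m)) $ i) = real n * \<theta> $ i - real n / CARD('d)" for i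
    by (simp add: sum_subtractf)
  moreover have "theta_hat H \<mu> n (\<lambda>m. Sigma_mat \<mu> *v gamma H (?lab m)) =
      (\<chi> i. 1 / CARD('d)) + (1 / n) *\<^sub>R (\<Sum>m<n. H *v gamma H (?lab m))"
    using assms(3) by (simp add: theta_hat_def matrix_vector_mul_assoc matrix_inv_left
        matrix_vector_mult_scaleR vec.sum)
  ultimately show ?thesis
    using assms(2) by (simp add: vec_eq_iff sum_component field_simps)
qed

lemma theta_hat_diff:
  "theta_hat H \<mu> n X - theta_hat H \<mu> n X' =
    H *v ((1 / n) *\<^sub>R (\<Sum>m<n. matrix_inv (Sigma_mat \<mu>) *v (X m - X' m)))"
  by (simp add: theta_hat_def vec.sum[symmetric] sum_subtractf matrix_vector_mult_diff_distrib
      matrix_vector_mult_scaleR scaleR_diff_right)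

lemma integral_W_centred_nth:
  assumes "anchored H \<mu>"
  shows "(\<integral>x. (A *v (x - Sigma_mat \<mu> *v gamma H i)) $ a \<partial>W H \<mu> i) = 0"
proof -
  have W: "law_on_Xd H (W H \<mu> i)"
    by (rule law_on_Xd_W[OF assms])
  then have "(\<integral>x. x - Sigma_mat \<mu> *v gamma H i \<partial>W H \<mu> i) = 0"
    by (simp add: integral_W_id[OF assms] law_on_Xd_def prob_space.finite_measure
        finite_measure.integrable_const prob_space.prob_space integrable_law_on_Xd[OF valid]
        continuous_on_id)
  moreover have "(\<integral>x. (A *v (x - Sigma_mat \<mu> *v gamma H i)) $ a \<partial>W H \<mu> i) =
      (A *v (\<integral>x. x - Sigma_mat \<mu> *v gamma H i \<partial>W H \<mu> i)) $ a"
    by (rule integral_bounded_linear[OF bounded_linear_compose[OF bounded_linear_vec_nth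
          matrix_vector_mul_bounded_linear]])
      (rule integrable_law_on_Xd[OF valid W], intro continuous_intros)
  ultimately show ?thesis
    by simp
qed

lemma norm_theta_hat_minus_theta:
  assumes "\<theta> \<in> Theta_n n" "n \<ge> 1" "invertible (Sigma_mat \<mu>)"
  shows "(norm (theta_hat H \<mu> n X - \<theta>))\<^sup>2 = (norm (\<Sum>m<n. matrix_inv (Sigma_mat \<mu>) *v
      (X m - Sigma_mat \<mu> *v gamma H (labelling n \<theta> m))))\<^sup>2 / n\<^sup>2"
  using theta_hat_diff[of \<mu> n X "\<lambda>m. Sigma_mat \<mu> *v gamma H (labelling n \<theta> m)"]
  by (simp add: theta_hat_class_means[OF assms] norm_H_mult_vec[OF valid] power_divide)

lemma R_fc_eq_class_variance:
  assumes "n \<ge> 1" "anchored H \<mu>" "invertible (Sigma_mat \<mu>)" "\<theta> \<in> Theta_n n"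
  shows "R_fc H n \<theta> \<mu> = ennreal ((\<Sum>i\<in>UNIV. \<theta> $ i * class_variance H \<mu> i) / n)"
proof -
  define lab where "lab = labelling n \<theta>"
  define M where "M m = W H \<mu> (lab m)" for m
  define Y where "Y m x = matrix_inv (Sigma_mat \<mu>) *v (x - Sigma_mat \<mu> *v gamma H (lab m))" for m x
  have moments: "prob_space (M m)" "integrable (M m) (\<lambda>x. Y m x $ a)"
    "integrable (M m) (\<lambda>x. (Y m x $ a)\<^sup>2)" "(\<integral>x. Y m x $ a \<partial>M m) = 0" for m a
    using law_on_Xd_W[OF assms(2), of "lab m"]
    by (simp_all add: law_on_Xd_def M_def Y_def integrable_law_on_Xd[OF valid] continuous_intros
        integral_W_centred_nth assms(2))
  have "integrable (Pi\<^sub>M {..<n} M) (\<lambda>X. (norm (\<Sum>m<n. Y m (X m)))\<^sup>2)"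
    by (rule integrable_norm_square_sum_indep) (simp_all add: moments)
  moreover have "(\<integral>X. (norm (\<Sum>m<n. Y m (X m)))\<^sup>2 \<partial>Pi\<^sub>M {..<n} M) = (\<Sum>m<n. class_variance H \<mu> (lab m))"
  proof -
    have "(\<integral>X. (norm (\<Sum>m<n. Y m (X m)))\<^sup>2 \<partial>Pi\<^sub>M {..<n} M) = (\<Sum>m<n. \<integral>x. (norm (Y m x))\<^sup>2 \<partial>M m)"
      by (rule integral_norm_square_sum_indep) (simp_all add: moments)
    then show ?thesis
      by (simp add: class_variance_def Y_def M_def)
  qed
  ultimately have "R_fc H n \<theta> \<mu> = ennreal ((\<Sum>m<n. class_variance H \<mu> (lab m)) / n\<^sup>2)"
    using assms by (simp add: R_fc_def norm_theta_hat_minus_theta M_def[abs_def] Y_def lab_def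
        nn_integral_eq_integral)
  also have "(\<Sum>m<n. class_variance H \<mu> (lab m)) = n * (\<Sum>i\<in>UNIV. \<theta> $ i * class_variance H \<mu> i)"
    by (simp add: sum_labelling card_labelling[OF assms(4)] lab_def sum_distrib_left mult_ac)
  finally show ?thesis
    using assms(1) by (simp add: power2_eq_square)
qed

lemma sum_class_variance:
  assumes "anchored H \<mu>" "invertible (Sigma_mat \<mu>)"
  shows "(\<Sum>i\<in>UNIV. class_variance H \<mu> i) =
    CARD('d) * ((\<integral>x. (norm (matrix_inv (Sigma_mat \<mu>) *v x))\<^sup>2 \<partial>\<mu>) - (1 - 1 / CARD('d)))"
proof -
  let ?B = "matrix_inv (Sigma_mat \<mu>)"
  have \<mu>: "law_on_Xd H \<mu>"
    using assms(1) by (simp add: anchored_iff_law_on_Xd[OF valid])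
  have "(\<Sum>i\<in>UNIV. (1 + gamma H i \<bullet> x) * (norm (?B *v x))\<^sup>2) = CARD('d) * (norm (?B *v x))\<^sup>2" for x
    by (simp add: sum_distrib_right[symmetric] sum.distrib sum_inner_gamma[OF valid])
  moreover have "(\<Sum>i\<in>UNIV. \<integral>x. (1 + gamma H i \<bullet> x) * (norm (?B *v x))\<^sup>2 \<partial>\<mu>) =
      (\<integral>x. (\<Sum>i\<in>UNIV. (1 + gamma H i \<bullet> x) * (norm (?B *v x))\<^sup>2) \<partial>\<mu>)"
    by (subst Bochner_Integration.integral_sum)
      (auto intro!: integrable_law_on_Xd[OF valid \<mu>] continuous_intros)
  ultimately show ?thesis
    by (simp only: class_variance_eq[OF assms] sum_subtractf) (simp add: right_diff_distrib)
qed

lemma card_square_le_second_moments: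
  assumes "law_on_Xd H \<rho>" "invertible (Sigma_mat \<rho>)"
  shows "(real CARD('k))\<^sup>2 \<le>
    (\<integral>x. (norm x)\<^sup>2 \<partial>\<rho>) * (\<integral>x. (norm (matrix_inv (Sigma_mat \<rho>) *v x))\<^sup>2 \<partial>\<rho>)"
proof -
  let ?B = "matrix_inv (Sigma_mat \<rho>)"
  have "(\<integral>x. (?B *v x) \<bullet> x \<partial>\<rho>) = CARD('k)"
    by (simp add: integral_inner_matrix_vector_mult[OF valid assms(1)] matrix_inv_left[OF assms(2)] trace_I)
  moreover have "(\<integral>x. (?B *v x) \<bullet> x \<partial>\<rho>)\<^sup>2 \<le>
      (\<integral>x. (norm (?B *v x))\<^sup>2 \<partial>\<rho>) * (\<integral>x. (norm x)\<^sup>2 \<partial>\<rho>)"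
    by (intro integral_inner_square_le integrable_law_on_Xd[OF valid assms(1)] continuous_intros)
  ultimately show ?thesis
    by (simp add: mult.commute)
qed

lemma integral_norm_square_pos:
  assumes "law_on_Xd H \<rho>" "invertible (Sigma_mat \<rho>)"
  shows "(\<integral>x. (norm x)\<^sup>2 \<partial>\<rho>) > 0"
proof -
  have "(\<integral>x. (norm x)\<^sup>2 \<partial>\<rho>) \<ge> 0"
    by (rule integral_nonneg_AE) simp
  moreover have "(\<integral>x. (norm x)\<^sup>2 \<partial>\<rho>) \<noteq> 0"
    using card_square_le_second_moments[OF assms] by auto
  ultimately show ?thesis
    by linarith
qed

lemma
  assumes "CARD('d) \<ge> 2" "CARD('k) = CARD('d) - 1" "anchored H \<rho>" "invertible (Sigma_mat \<rho>)"
  defines "T \<equiv> \<integral>x. (norm x)\<^sup>2 \<partial>\<rho>"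
  shows invertible_Sigma_mat_sym_law: "invertible (Sigma_mat (sym_law H \<rho>))"
    and class_variance_sym_law:
      "class_variance H (sym_law H \<rho>) i = (real CARD('k))\<^sup>2 / T - (1 - 1 / CARD('d))"
proof -
  define k where "k = real CARD('k)"
  have \<rho>: "law_on_Xd H \<rho>"
    using assms(3) by (simp add: anchored_iff_law_on_Xd[OF valid])
  have "k > 0"
    by (simp add: k_def)
  have "T > 0"
    unfolding T_def by (rule integral_norm_square_pos[OF \<rho> assms(4)])
  have Sigma: "Sigma_mat (sym_law H \<rho>) = (T / k) *\<^sub>R mat 1"
    using Sigma_mat_sym_law[OF valid assms(1) \<rho>] assms(2)
    by (simp add: trace_Sigma_mat[OF valid \<rho>] T_def k_def)
  then show "invertible (Sigma_mat (sym_law H \<rho>))"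
    using \<open>T > 0\<close> \<open>k > 0\<close> by (simp add: invertible_scaleR_mat_1)
  moreover have "matrix_inv (Sigma_mat (sym_law H \<rho>)) *v x = (k / T) *\<^sub>R x" for x
    using \<open>T > 0\<close> \<open>k > 0\<close>
    by (simp add: Sigma matrix_inv_scaleR_mat_1 scaleR_matrix_vector_assoc[symmetric] matrix_vector_mul_lid)
  moreover have "(1 + gamma H i \<bullet> x) * (norm ((k / T) *\<^sub>R x))\<^sup>2 = (k / T)\<^sup>2 * ((1 + gamma H i \<bullet> x) * (norm x)\<^sup>2)"
    for x
    by (simp add: power_mult_distrib power_divide)
  ultimately have "class_variance H (sym_law H \<rho>) i =
      (k / T)\<^sup>2 * (\<integral>x. (1 + gamma H i \<bullet> x) * (norm x)\<^sup>2 \<partial>sym_law H \<rho>) - (1 - 1 / CARD('d))"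
    by (simp only: class_variance_eq[OF anchored_sym_law[OF valid assms(3)]] integral_mult_right_zero)
  also have "\<dots> = k\<^sup>2 / T - (1 - 1 / CARD('d))"
    unfolding integral_weighted_norm_square_sym_law[OF valid \<rho>] T_def[symmetric]
    using \<open>T > 0\<close> by (simp add: power2_eq_square)
  finally show "class_variance H (sym_law H \<rho>) i = (real CARD('k))\<^sup>2 / T - (1 - 1 / CARD('d))"
    by (simp add: k_def)
qed

lemma exists_class_variance_ge:
  assumes "anchored H \<mu>" "invertible (Sigma_mat \<mu>)"
  obtains j where "(\<integral>x. (norm (matrix_inv (Sigma_mat \<mu>) *v x))\<^sup>2 \<partial>\<mu>) - (1 - 1 / CARD('d)) \<le>
    class_variance H \<mu> j"
proof (rule ccontr)
  let ?v = "(\<integral>x. (norm (matrix_inv (Sigma_mat \<mu>) *v x))\<^sup>2 \<partial>\<mu>) - (1 - 1 / CARD('d))"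
  assume "\<not> thesis"
  then have "class_variance H \<mu> i < ?v" for i
    using that not_le by metis
  then have "(\<Sum>i\<in>UNIV. class_variance H \<mu> i) < (\<Sum>i\<in>(UNIV :: 'd set). ?v)"
    by (intro sum_strict_mono) auto
  then show False
    by (simp add: sum_class_variance[OF assms])
qed

lemma R_fc_axis:
  assumes "n \<ge> 1" "anchored H \<mu>" "invertible (Sigma_mat \<mu>)"
  shows "R_fc H n (axis j 1) \<mu> = ennreal (class_variance H \<mu> j / n)"
  using R_fc_eq_class_variance[OF assms axis_in_Theta_n[OF assms(1)]]
  by (simp add: axis_def if_distrib[where f="\<lambda>t. t * _"] cong: if_cong)

lemma R_fc_sym_law:
  assumes "CARD('d) \<ge> 2" "CARD('k) = CARD('d) - 1" "n \<ge> 1" "anchored H \<rho>"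
    and "invertible (Sigma_mat \<rho>)" "\<theta> \<in> Theta_n n"
  shows "R_fc H n \<theta> (sym_law H \<rho>) =
    ennreal (((real CARD('k))\<^sup>2 / (\<integral>x. (norm x)\<^sup>2 \<partial>\<rho>) - (1 - 1 / CARD('d))) / n)"
proof -
  have "(\<Sum>i\<in>UNIV. \<theta> $ i) = 1"
    using assms(6) by (simp add: Theta_n_def prob_simplex_def)
  then show ?thesis
    using R_fc_eq_class_variance[OF assms(3) anchored_sym_law[OF valid assms(4)]
        invertible_Sigma_mat_sym_law[OF assms(1,2,4,5)] assms(6)]
    by (simp add: class_variance_sym_law[OF assms(1,2,4,5)] sum_distrib_right[symmetric])
qed

lemma Sup_R_fc_sym_law_le:
  assumes "CARD('d) \<ge> 2" "CARD('k) = CARD('d) - 1" "n \<ge> 1" "anchored H \<rho>"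
  shows "(SUP \<theta>\<in>Theta_n n. R_fc H n \<theta> (sym_law H \<rho>)) \<le> (SUP \<theta>\<in>Theta_n n. R_fc H n \<theta> \<rho>)"
proof (cases "invertible (Sigma_mat \<rho>)")
  case False
  then have "R_fc H n (axis j 1) \<rho> = \<infinity>" for j
    by (simp add: R_fc_def)
  then have "\<top> \<le> (SUP \<theta>\<in>Theta_n n. R_fc H n \<theta> \<rho>)"
    using SUP_upper[OF axis_in_Theta_n[OF assms(3)], of "\<lambda>\<theta>. R_fc H n \<theta> \<rho>"] by simp
  then show ?thesis
    using top_greatest order_trans by blast
next
  case True
  have \<rho>: "law_on_Xd H \<rho>"
    using assms(4) by (simp add: anchored_iff_law_on_Xd[OF valid])
  obtain j where j: "(\<integral>x. (norm (matrix_inv (Sigma_mat \<rho>) *v x))\<^sup>2 \<partial>\<rho>) - (1 - 1 / CARD('d)) \<le>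
      class_variance H \<rho> j"
    using exists_class_variance_ge[OF assms(4) True] .
  have "(real CARD('k))\<^sup>2 / (\<integral>x. (norm x)\<^sup>2 \<partial>\<rho>) \<le> (\<integral>x. (norm (matrix_inv (Sigma_mat \<rho>) *v x))\<^sup>2 \<partial>\<rho>)"
    using integral_norm_square_pos[OF \<rho> True] card_square_le_second_moments[OF \<rho> True]
    by (simp add: divide_le_eq mult.commute)
  then have "R_fc H n \<theta> (sym_law H \<rho>) \<le> R_fc H n (axis j 1) \<rho>" if "\<theta> \<in> Theta_n n" for \<theta>
    using j by (simp add: R_fc_sym_law[OF assms True that] R_fc_axis[OF assms(3,4) True]
        divide_right_mono ennreal_leI)
  then show ?thesis
    by (meson SUP_least SUP_upper2 axis_in_Theta_n[OF assms(3)])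
qed

end

theorem theorem6p1:
  fixes H :: "real^'k^'d" and \<rho> :: "(real^'k) measure" and n :: nat
  assumes "CARD('d) \<ge> 2" and "CARD('k) = CARD('d) - 1" and "n \<ge> 1"
    and "valid_H H" and "anchored H \<rho>"
  shows "chi_star H (sym_law H \<rho>) \<le> chi_star H \<rho>
    \<and> (SUP \<theta>\<in>Theta_n n. R_fc H n \<theta> (sym_law H \<rho>)) \<le> (SUP \<theta>\<in>Theta_n n. R_fc H n \<theta> \<rho>)
    \<and> Sigma_mat (sym_law H \<rho>) = (trace (Sigma_mat \<rho>) / real (CARD('d) - 1)) *\<^sub>R mat 1"
proof -
  have \<rho>: "law_on_Xd H \<rho>"
    using assms(5) by (simp add: anchored_iff_law_on_Xd[OF assms(4)])
  then have "prob_space \<rho>" "sets \<rho> = sets borel"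
    by (simp_all add: law_on_Xd_def)
  then show ?thesis
    using chi_star_sym_law_le[OF assms(4,1)] Sup_R_fc_sym_law_le[OF assms(4,1,2,3,5)]
      Sigma_mat_sym_law[OF assms(4,1) \<rho>]
    by blast
qed

end
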